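(* Let $n$ be a positive integer. Then $\mathsf{NAADT}(\mathsf{OMB}_n) = n$ and $\mathsf{D}_{\mathrm{cc}}^\rightarrow(\mathsf{OMB}_n \circ \mathsf{AND}) = \lceil\log(n + 1)\rceil$.
   Context: $\mathsf{OMB}_n:\{0,1\}^n\to\{0,1\}$ is defined by $\mathsf{OMB}_n(x)=1$ if $\max\{i\in[n]:x_i=0\}$ is odd and $0$ otherwise, with $\mathsf{OMB}_n(1^n)=0$. $\mathsf{AND}_S(x)=\prod_{i\in S}x_i$. $\mathsf{NAADT}(f)$ is the minimum $k$ for which there exist $S_1,\dots,S_k\subseteq[n]$ such that $f(x)$ is determined by $\mathsf{AND}_{S_1}(x),\dots,\mathsf{AND}_{S_k}(x)$ for all $x$. $f\circ\mathsf{AND}$ is the two-party function $(x,y)\mapsto f(x_1\wedge y_1,\dots,x_n\wedge y_n)$ (Alice holds $x$, Bob $y$); $\mathsf{D}_{\mathrm{cc}}^\rightarrow$ is deterministic one-way communication complexity. Logarithms are base 2. *)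

theory Defs
  imports Complex_Main
begin

text \<open>Inputs in {0,1}^n are bool lists of length n; coordinate x_i (i in [n] = {1..n})
  is xs ! (i - 1); True = 1, False = 0.\<close>

definition cube :: "nat \<Rightarrow> bool list set" where
  "cube n = {xs. length xs = n}"

definition OMB :: "nat \<Rightarrow> bool list \<Rightarrow> bool" where
  "OMB n xs = (if (\<forall>i\<in>{1..n}. xs ! (i - 1)) then False
               else odd (Max {i \<in> {1..n}. \<not> xs ! (i - 1)}))"

definition AND_S :: "nat set \<Rightarrow> bool list \<Rightarrow> bool" where
  "AND_S S xs = (\<forall>i\<in>S. xs ! (i - 1))"

definition NAADT :: "nat \<Rightarrow> (bool list \<Rightarrow> bool) \<Rightarrow> nat" where
  "NAADT n f = (LEAST k. \<exists>S :: nat \<Rightarrow> nat set.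
      (\<forall>j<k. S j \<subseteq> {1..n}) \<and>
      (\<forall>x\<in>cube n. \<forall>y\<in>cube n. (\<forall>j<k. AND_S (S j) x = AND_S (S j) y) \<longrightarrow> f x = f y))"

definition D_oneway :: "'a set \<Rightarrow> 'b set \<Rightarrow> ('a \<Rightarrow> 'b \<Rightarrow> bool) \<Rightarrow> nat" where
  "D_oneway X Y F = (LEAST c. \<exists>(M :: 'a \<Rightarrow> bool list) (Out :: bool list \<Rightarrow> 'b \<Rightarrow> bool).
      \<forall>x\<in>X. length (M x) = c \<and> (\<forall>y\<in>Y. Out (M x) y = F x y))"

definition comp_AND :: "(bool list \<Rightarrow> bool) \<Rightarrow> bool list \<Rightarrow> bool list \<Rightarrow> bool" where
  "comp_AND f xs ys = f (map2 (\<and>) xs ys)"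

end

theory Submission
  imports Defs "HOL-Library.FuncSet" "HOL-Library.Log_Nat"
begin

(* In a one-way protocol Bob must be able to rebuild Alice's row y \<mapsto> F x y from her
   message, and sending the index of that row suffices; so the one-way complexity is
   the ceiling of log 2 of the number of distinct rows. Since OMB_n (x \<and> y) is the
   parity of the later of the last zeros of x and y, the rows of OMB_n \<circ> AND are
   indexed by the position t \<in> {0..n} of the last zero of x, and they are pairwise
   distinct: there are n + 1 of them.

   For the decision-tree bound, OMB_n alternates along the inputs 0^t 1^(n-t),
   t = 0..n. Passing from 0^(m-1) 1^(n-m+1) to 0^m 1^(n-m) changes AND_S only when
   Min S = m, so fewer than n queries miss some m and cannot separate two inputs
   with different values; the n singleton queries read off the whole input. *)

lemma card_bool_lists: "card {xs :: bool list. length xs = c} = 2 ^ c"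
  using card_lists_length_eq[of "UNIV :: bool set" c] by simp

lemma finite_bool_lists: "finite {xs :: bool list. length xs = c}"
  using finite_lists_length_eq[of "UNIV :: bool set" c] by simp

lemma Least_le_two_power_eq_ceillog2: "(LEAST c. m \<le> 2 ^ c) = ceillog2 m"
proof (cases "m = 0")
  case False
  then show ?thesis
    by (intro Least_equality) (simp_all add: le_two_power_ceillog2 ceillog2_le_iff)
qed simp

lemma int_ceillog2:
  assumes "0 < m"
  shows "int (ceillog2 m) = \<lceil>log 2 (real m)\<rceil>"
proof -
  have "0 \<le> log 2 (real m)"
    using assms by simp
  then have "- 1 < log 2 (real m)"
    by linarith
  then show ?thesis
    using assms by (simp add: ceillog2_def)
qed

definition oneway_protocol ::
    "'a set \<Rightarrow> 'b set \<Rightarrow> ('a \<Rightarrow> 'b \<Rightarrow> bool) \<Rightarrow> ('a \<Rightarrow> bool list) \<Rightarrow> (bool list \<Rightarrow> 'b \<Rightarrow> bool) \<Rightarrow> nat \<Rightarrow> bool"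
  where "oneway_protocol X Y F M Out c \<longleftrightarrow> (\<forall>x\<in>X. length (M x) = c \<and> (\<forall>y\<in>Y. Out (M x) y = F x y))"

definition oneway_rows :: "'a set \<Rightarrow> 'b set \<Rightarrow> ('a \<Rightarrow> 'b \<Rightarrow> bool) \<Rightarrow> ('b \<Rightarrow> bool) set" where
  "oneway_rows X Y F = (\<lambda>x. restrict (F x) Y) ` X"

lemma D_oneway_eq_Least: "D_oneway X Y F = (LEAST c. \<exists>M Out. oneway_protocol X Y F M Out c)"
  by (simp add: D_oneway_def oneway_protocol_def)

lemma oneway_protocol_of_rows:
  fixes X :: "'a set" and Y :: "'b set"
  assumes "finite (oneway_rows X Y F)" "card (oneway_rows X Y F) \<le> 2 ^ c"
  shows "\<exists>M Out. oneway_protocol X Y F M Out c"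
proof -
  have "card (oneway_rows X Y F) \<le> card {xs :: bool list. length xs = c}"
    using assms(2) by (simp add: card_bool_lists)
  then obtain e :: "('b \<Rightarrow> bool) \<Rightarrow> bool list"
    where e: "inj_on e (oneway_rows X Y F)" "e ` oneway_rows X Y F \<subseteq> {xs. length xs = c}"
    using card_le_inj[OF assms(1) finite_bool_lists] by blast
  define M where "M x = e (restrict (F x) Y)" for x
  define Out where "Out m = inv_into (oneway_rows X Y F) e m" for m
  have "oneway_protocol X Y F M Out c"
    unfolding oneway_protocol_def
  proof
    fix x
    assume "x \<in> X"
    then have row: "restrict (F x) Y \<in> oneway_rows X Y F"
      by (simp add: oneway_rows_def)
    then have "M x \<in> {xs. length xs = c}"
      using e(2) unfolding M_def by blast
    moreover have "Out (M x) = restrict (F x) Y"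
      unfolding M_def Out_def using e(1) row by (rule inv_into_f_f)
    ultimately show "length (M x) = c \<and> (\<forall>y\<in>Y. Out (M x) y = F x y)"
      by simp
  qed
  then show ?thesis
    by blast
qed

lemma card_oneway_rows_le:
  assumes "oneway_protocol X Y F M Out c"
  shows "card (oneway_rows X Y F) \<le> 2 ^ c"
proof -
  have "oneway_rows X Y F \<subseteq> (\<lambda>m. restrict (Out m) Y) ` {xs. length xs = c}"
    using assms unfolding oneway_protocol_def oneway_rows_def by force
  then have "card (oneway_rows X Y F) \<le> card ((\<lambda>m. restrict (Out m) Y) ` {xs. length xs = c})"
    by (intro card_mono finite_imageI finite_bool_lists)
  also have "\<dots> \<le> card {xs :: bool list. length xs = c}"
    by (rule card_image_le[OF finite_bool_lists])
  finally show ?thesis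
    by (simp add: card_bool_lists)
qed

theorem D_oneway_eq_ceillog2_card_rows:
  assumes "finite (oneway_rows X Y F)"
  shows "D_oneway X Y F = ceillog2 (card (oneway_rows X Y F))"
proof -
  have protocol_iff: "(\<exists>M Out. oneway_protocol X Y F M Out c) \<longleftrightarrow> card (oneway_rows X Y F) \<le> 2 ^ c"
    for c
    using card_oneway_rows_le oneway_protocol_of_rows[OF assms] by blast
  show ?thesis
    unfolding D_oneway_eq_Least protocol_iff by (rule Least_le_two_power_eq_ceillog2)
qed

definition last_zero :: "nat \<Rightarrow> bool list \<Rightarrow> nat" where
  "last_zero n x = Max ({0} \<union> {i \<in> {1..n}. \<not> x ! (i - 1)})"

definition zeros_then_ones :: "nat \<Rightarrow> nat \<Rightarrow> bool list" where
  "zeros_then_ones n t = map (\<lambda>i. t < i) [1..<n + 1]"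

lemma zeros_then_ones_in_cube: "zeros_then_ones n t \<in> cube n"
  by (simp add: zeros_then_ones_def cube_def)

lemma nth_zeros_then_ones [simp]: "i < n \<Longrightarrow> zeros_then_ones n t ! i = (t \<le> i)"
  by (simp add: zeros_then_ones_def less_Suc_eq_le del: upt_Suc)

lemma last_zero_le: "last_zero n x \<le> n"
  unfolding last_zero_def by (rule Max.boundedI) auto

lemma last_zero_zeros_then_ones: "t \<le> n \<Longrightarrow> last_zero n (zeros_then_ones n t) = t"
proof -
  assume "t \<le> n"
  then have zeros: "{0} \<union> {i \<in> {1..n}. \<not> zeros_then_ones n t ! (i - 1)} = {0..t}"
    by auto
  show ?thesis
    unfolding last_zero_def zeros by (rule Max_eqI) auto
qed

lemma last_zero_image_cube: "last_zero n ` cube n = {0..n}"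
proof
  show "last_zero n ` cube n \<subseteq> {0..n}"
    using last_zero_le by auto
  show "{0..n} \<subseteq> last_zero n ` cube n"
    using last_zero_zeros_then_ones zeros_then_ones_in_cube by (metis atLeastAtMost_iff image_eqI subsetI)
qed

lemma last_zero_map2_conj:
  assumes "x \<in> cube n" "y \<in> cube n"
  shows "last_zero n (map2 (\<and>) x y) = max (last_zero n x) (last_zero n y)"
proof -
  have "{0} \<union> {i \<in> {1..n}. \<not> map2 (\<and>) x y ! (i - 1)}
      = ({0} \<union> {i \<in> {1..n}. \<not> x ! (i - 1)}) \<union> ({0} \<union> {i \<in> {1..n}. \<not> y ! (i - 1)})"
    using assms by (auto simp: cube_def)
  then have "last_zero n (map2 (\<and>) x y)
      = Max (({0} \<union> {i \<in> {1..n}. \<not> x ! (i - 1)}) \<union> ({0} \<union> {i \<in> {1..n}. \<not> y ! (i - 1)}))"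
    unfolding last_zero_def by (simp only:)
  also have "\<dots> = max (last_zero n x) (last_zero n y)"
    unfolding last_zero_def by (rule Max_Un) auto
  finally show ?thesis .
qed

lemma OMB_eq_odd_last_zero: "OMB n x = odd (last_zero n x)"
proof (cases "\<forall>i\<in>{1..n}. x ! (i - 1)")
  case True
  then have no_zero: "{i \<in> {1..n}. \<not> x ! (i - 1)} = {}"
    by auto
  have "last_zero n x = 0"
    unfolding last_zero_def no_zero by simp
  with True show ?thesis
    by (simp add: OMB_def)
next
  case False
  then have "{i \<in> {1..n}. \<not> x ! (i - 1)} \<noteq> {}"
    by auto
  then have "last_zero n x = Max {i \<in> {1..n}. \<not> x ! (i - 1)}"
    unfolding last_zero_def by (subst Max_Un) auto
  moreover have "OMB n x = odd (Max {i \<in> {1..n}. \<not> x ! (i - 1)})"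
    unfolding OMB_def by (simp only: False if_False)
  ultimately show ?thesis
    by simp
qed

lemma comp_AND_OMB:
  "x \<in> cube n \<Longrightarrow> y \<in> cube n \<Longrightarrow>
     comp_AND (OMB n) x y = odd (max (last_zero n x) (last_zero n y))"
  by (simp add: comp_AND_def OMB_eq_odd_last_zero last_zero_map2_conj)

lemma oneway_rows_OMB_AND:
  "oneway_rows (cube n) (cube n) (comp_AND (OMB n))
     = (\<lambda>t. restrict (\<lambda>y. odd (max t (last_zero n y))) (cube n)) ` {0..n}"
proof -
  have "oneway_rows (cube n) (cube n) (comp_AND (OMB n))
      = (\<lambda>t. restrict (\<lambda>y. odd (max t (last_zero n y))) (cube n)) ` last_zero n ` cube n"
    unfolding oneway_rows_def image_image
    by (intro image_cong refl restrict_ext) (simp add: comp_AND_OMB)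
  then show ?thesis
    by (simp only: last_zero_image_cube)
qed

lemma inj_on_max_parity_rows:
  "inj_on (\<lambda>t. restrict (\<lambda>y. odd (max t (last_zero n y))) (cube n)) {0..n}"
proof (rule linorder_inj_onI')
  fix s t :: nat
  assume "s \<in> {0..n}" "t \<in> {0..n}" "s < t"
  define y where "y = zeros_then_ones n (t - 1)"
  have y: "y \<in> cube n" "last_zero n y = t - 1"
    using \<open>t \<in> {0..n}\<close> by (simp_all add: y_def zeros_then_ones_in_cube last_zero_zeros_then_ones)
  have "max s (t - 1) = t - 1" "max t (t - 1) = t"
    using \<open>s < t\<close> by auto
  moreover have "odd (t - 1) \<noteq> odd t"
    using \<open>s < t\<close> by (cases t) simp_all
  ultimately have "odd (max s (last_zero n y)) \<noteq> odd (max t (last_zero n y))"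
    using y(2) by simp
  then show "restrict (\<lambda>y. odd (max s (last_zero n y))) (cube n)
      \<noteq> restrict (\<lambda>y. odd (max t (last_zero n y))) (cube n)"
    using y(1) by (auto dest: fun_cong[of _ _ y])
qed

lemma D_oneway_OMB_AND: "D_oneway (cube n) (cube n) (comp_AND (OMB n)) = ceillog2 (n + 1)"
proof -
  have "card (oneway_rows (cube n) (cube n) (comp_AND (OMB n))) = n + 1"
    by (simp add: oneway_rows_OMB_AND card_image inj_on_max_parity_rows)
  moreover have "finite (oneway_rows (cube n) (cube n) (comp_AND (OMB n)))"
    by (simp add: oneway_rows_OMB_AND)
  ultimately show ?thesis
    by (simp add: D_oneway_eq_ceillog2_card_rows)
qed

definition determined_by_ANDs :: "nat \<Rightarrow> (bool list \<Rightarrow> bool) \<Rightarrow> (nat \<Rightarrow> nat set) \<Rightarrow> nat \<Rightarrow> bool" where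
  "determined_by_ANDs n f S k \<longleftrightarrow> (\<forall>j<k. S j \<subseteq> {1..n}) \<and>
     (\<forall>x\<in>cube n. \<forall>y\<in>cube n. (\<forall>j<k. AND_S (S j) x = AND_S (S j) y) \<longrightarrow> f x = f y)"

lemma NAADT_eq_Least: "NAADT n f = (LEAST k. \<exists>S. determined_by_ANDs n f S k)"
  by (simp add: NAADT_def determined_by_ANDs_def)

lemma determined_by_singletons: "determined_by_ANDs n f (\<lambda>j. {j + 1}) n"
  unfolding determined_by_ANDs_def
proof (intro conjI allI impI ballI)
  fix x y
  assume "x \<in> cube n" "y \<in> cube n" and "\<forall>j<n. AND_S {j + 1} x = AND_S {j + 1} y"
  then have "x = y"
    by (intro nth_equalityI) (auto simp: AND_S_def cube_def)
  then show "f x = f y"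
    by simp
qed auto

lemma AND_S_zeros_then_ones:
  "S \<subseteq> {1..n} \<Longrightarrow> AND_S S (zeros_then_ones n t) = (\<forall>i\<in>S. t < i)"
  by (force simp: AND_S_def)

lemma Min_eq_if_AND_S_zeros_then_ones_differ:
  assumes "S \<subseteq> {1..n}" "AND_S S (zeros_then_ones n (m - 1)) \<noteq> AND_S S (zeros_then_ones n m)"
  shows "Min S = m"
proof (rule Min_eqI)
  show "finite S"
    using assms(1) finite_subset by blast
  have "(\<forall>i\<in>S. m - 1 < i) \<noteq> (\<forall>i\<in>S. m < i)"
    using assms by (simp add: AND_S_zeros_then_ones)
  moreover have "(\<forall>i\<in>S. m < i) \<longrightarrow> (\<forall>i\<in>S. m - 1 < i)"
    by (simp add: less_imp_diff_less)
  ultimately have above: "\<forall>i\<in>S. m - 1 < i" and "\<exists>i\<in>S. i \<le> m"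
    by (blast, meson not_le)
  then obtain i where i: "i \<in> S" "i \<le> m"
    by blast
  moreover have "m - 1 < i"
    using above i(1) by blast
  ultimately have "i = m"
    by arith
  with i(1) show "m \<in> S"
    by simp
  show "\<And>i. i \<in> S \<Longrightarrow> m \<le> i"
    using above by fastforce
qed

lemma n_le_if_determined_by_ANDs:
  assumes alternates: "\<And>m. m \<in> {1..n} \<Longrightarrow> f (zeros_then_ones n (m - 1)) \<noteq> f (zeros_then_ones n m)"
    and determined: "determined_by_ANDs n f S k"
  shows "n \<le> k"
proof (rule ccontr)
  assume "\<not> n \<le> k"
  then have "card ((\<lambda>j. Min (S j)) ` {..<k}) < card {1..n}"
    using card_image_le[of "{..<k}" "\<lambda>j. Min (S j)"] by simp
  then obtain m where m: "m \<in> {1..n}" "m \<notin> (\<lambda>j. Min (S j)) ` {..<k}"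
    by (metis card_mono finite_imageI finite_lessThan leD subsetI)
  have "AND_S (S j) (zeros_then_ones n (m - 1)) = AND_S (S j) (zeros_then_ones n m)" if "j < k" for j
    using Min_eq_if_AND_S_zeros_then_ones_differ that m(2) determined
    unfolding determined_by_ANDs_def by blast
  then have "f (zeros_then_ones n (m - 1)) = f (zeros_then_ones n m)"
    using determined zeros_then_ones_in_cube unfolding determined_by_ANDs_def by blast
  with alternates m(1) show False
    by blast
qed

lemma NAADT_eq_if_alternating:
  assumes "\<And>m. m \<in> {1..n} \<Longrightarrow> f (zeros_then_ones n (m - 1)) \<noteq> f (zeros_then_ones n m)"
  shows "NAADT n f = n"
  unfolding NAADT_eq_Least
proof (rule Least_equality)
  show "\<exists>S. determined_by_ANDs n f S n"
    using determined_by_singletons by blast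
  fix k
  assume "\<exists>S. determined_by_ANDs n f S k"
  then obtain S where S: "determined_by_ANDs n f S k"
    by blast
  show "n \<le> k"
    by (rule n_le_if_determined_by_ANDs[OF assms S])
qed

theorem theorem4p1:
  fixes n :: nat
  assumes "n \<ge> 1"
  shows "NAADT n (OMB n) = n \<and>
         int (D_oneway (cube n) (cube n) (comp_AND (OMB n))) = \<lceil>log 2 (real n + 1)\<rceil>"
proof
  show "NAADT n (OMB n) = n"
  proof (rule NAADT_eq_if_alternating)
    fix m
    assume "m \<in> {1..n}"
    then show "OMB n (zeros_then_ones n (m - 1)) \<noteq> OMB n (zeros_then_ones n m)"
      by (cases m) (simp_all add: OMB_eq_odd_last_zero last_zero_zeros_then_ones)
  qed
  show "int (D_oneway (cube n) (cube n) (comp_AND (OMB n))) = \<lceil>log 2 (real n + 1)\<rceil>"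
    using int_ceillog2[of "n + 1"] by (simp add: D_oneway_OMB_AND add.commute)
qed

end
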